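(* Let $G$ be a finite simple connected well-dominated graph of order at least $2$ that has an isolatable vertex. Then the Cartesian product $G \,\square\, H$ is not well-dominated for any finite simple connected graph $H$ of order at least $2$.
   Context: A vertex $x$ of $G$ is isolatable if there is an independent set $I$ in $G$ such that $x$ is an isolated vertex of the induced subgraph $G-N[I]$, where $N[I]$ is the closed neighborhood of $I$. A graph is well-dominated if every minimal (with respect to inclusion) dominating set is a minimum dominating set. The Cartesian product $G\,\square\, H$ has vertex set $V(G)\times V(H)$, with $(g_1,h_1)$ adjacent to $(g_2,h_2)$ iff either ($g_1=g_2$ and $h_1h_2\in E(H)$) or ($h_1=h_2$ and $g_1g_2\in E(G)$). *)

theory Defs
  imports Main
begin

definition simple_graph :: "'a set \<Rightarrow> ('a \<Rightarrow> 'a \<Rightarrow> bool) \<Rightarrow> bool" where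
  "simple_graph V E \<longleftrightarrow> finite V \<and> (\<forall>x y. E x y \<longrightarrow> x \<in> V \<and> y \<in> V)
     \<and> (\<forall>x y. E x y \<longrightarrow> E y x) \<and> (\<forall>x. \<not> E x x)"

definition connected_graph :: "'a set \<Rightarrow> ('a \<Rightarrow> 'a \<Rightarrow> bool) \<Rightarrow> bool" where
  "connected_graph V E \<longleftrightarrow> V \<noteq> {} \<and> (\<forall>x\<in>V. \<forall>y\<in>V. E\<^sup>*\<^sup>* x y)"

definition closed_nbhd :: "'a set \<Rightarrow> ('a \<Rightarrow> 'a \<Rightarrow> bool) \<Rightarrow> 'a set \<Rightarrow> 'a set" where
  "closed_nbhd V E S = S \<union> {y\<in>V. \<exists>x\<in>S. E x y}"

definition dominating_set :: "'a set \<Rightarrow> ('a \<Rightarrow> 'a \<Rightarrow> bool) \<Rightarrow> 'a set \<Rightarrow> bool" where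
  "dominating_set V E D \<longleftrightarrow> D \<subseteq> V \<and> (\<forall>v\<in>V. v \<in> D \<or> (\<exists>u\<in>D. E u v))"

definition minimal_dominating_set :: "'a set \<Rightarrow> ('a \<Rightarrow> 'a \<Rightarrow> bool) \<Rightarrow> 'a set \<Rightarrow> bool" where
  "minimal_dominating_set V E D \<longleftrightarrow> dominating_set V E D \<and>
     (\<forall>D'. D' \<subset> D \<longrightarrow> \<not> dominating_set V E D')"

definition minimum_dominating_set :: "'a set \<Rightarrow> ('a \<Rightarrow> 'a \<Rightarrow> bool) \<Rightarrow> 'a set \<Rightarrow> bool" where
  "minimum_dominating_set V E D \<longleftrightarrow> dominating_set V E D \<and>
     (\<forall>D'. dominating_set V E D' \<longrightarrow> card D \<le> card D')"

definition well_dominated :: "'a set \<Rightarrow> ('a \<Rightarrow> 'a \<Rightarrow> bool) \<Rightarrow> bool" where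
  "well_dominated V E \<longleftrightarrow> (\<forall>D. minimal_dominating_set V E D \<longrightarrow> minimum_dominating_set V E D)"

definition independent_set :: "'a set \<Rightarrow> ('a \<Rightarrow> 'a \<Rightarrow> bool) \<Rightarrow> 'a set \<Rightarrow> bool" where
  "independent_set V E I \<longleftrightarrow> I \<subseteq> V \<and> (\<forall>x\<in>I. \<forall>y\<in>I. \<not> E x y)"

definition isolatable :: "'a set \<Rightarrow> ('a \<Rightarrow> 'a \<Rightarrow> bool) \<Rightarrow> 'a \<Rightarrow> bool" where
  "isolatable V E x \<longleftrightarrow> (\<exists>I. independent_set V E I \<and>
     x \<in> V - closed_nbhd V E I \<and>
     (\<forall>y \<in> V - closed_nbhd V E I. \<not> E x y))"

definition cart_prod_vertices :: "'a set \<Rightarrow> 'b set \<Rightarrow> ('a \<times> 'b) set" where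
  "cart_prod_vertices VG VH = VG \<times> VH"

definition cart_prod_edges ::
  "('a \<Rightarrow> 'a \<Rightarrow> bool) \<Rightarrow> ('b \<Rightarrow> 'b \<Rightarrow> bool) \<Rightarrow> ('a \<times> 'b) \<Rightarrow> ('a \<times> 'b) \<Rightarrow> bool" where
  "cart_prod_edges EG EH p q \<longleftrightarrow>
     (fst p = fst q \<and> EH (snd p) (snd q)) \<or> (snd p = snd q \<and> EG (fst p) (fst q))"

end

theory Submission
  imports Defs
begin

text \<open>By the Bollobas-Cockayne argument, G has a minimum dominating set D in which every
  vertex has an external private neighbour; this makes D \<times> V(H) a minimal dominating set of
  G \<box> H, so if G \<box> H were well-dominated its domination number would be \<gamma>(G)|V(H)|.
  On the other hand, extend I \<union> {x} (with I isolating x) to a maximal independent set J.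
  It is a minimal dominating set of G, so |J| = \<gamma>(G). Every neighbour of x is dominated by
  J - {x}, hence J \<times> V(H) minus a single vertex (x, h) still dominates G \<box> H, which
  contradicts \<gamma>(G \<box> H) = |J||V(H)|.\<close>

lemma simple_graphD:
  assumes "simple_graph V E"
  shows "finite V" and "E x y \<Longrightarrow> x \<in> V" and "E x y \<Longrightarrow> y \<in> V"
    and "E x y \<Longrightarrow> E y x" and "\<not> E x x"
  using assms unfolding simple_graph_def by blast+

lemma connected_graph_neighbour:
  assumes "connected_graph V E" and "card V \<ge> 2" and "v \<in> V"
  obtains u where "E v u"
proof -
  have "\<not> V \<subseteq> {v}"
    using assms(2) card_mono[of "{v}" V] by auto
  then obtain w where "w \<in> V" "w \<noteq> v" by blast
  moreover have "E\<^sup>*\<^sup>* v w"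
    using assms(1,3) \<open>w \<in> V\<close> unfolding connected_graph_def by blast
  ultimately show ?thesis
    using that by (metis converse_rtranclpE)
qed

lemma connected_graph_edge:
  assumes "connected_graph V E" and "card V \<ge> 2"
  obtains u v where "u \<in> V" and "E u v"
proof -
  obtain u where "u \<in> V"
    using assms(2) by fastforce
  then show ?thesis
    using connected_graph_neighbour[OF assms] that by blast
qed

lemma dominating_set_finite:
  assumes "simple_graph V E" and "dominating_set V E D"
  shows "finite D"
  using assms finite_subset unfolding simple_graph_def dominating_set_def by blast

lemma ex_minimum_dominating_set: "\<exists>D. minimum_dominating_set V E D"
proof -
  have "dominating_set V E V"
    by (simp add: dominating_set_def)
  then show ?thesis
    using ex_has_least_nat[of "dominating_set V E" V card]
    unfolding minimum_dominating_set_def by blast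
qed

lemma minimum_imp_minimal_dominating_set:
  assumes "simple_graph V E" and "minimum_dominating_set V E D"
  shows "minimal_dominating_set V E D"
  unfolding minimal_dominating_set_def
proof (intro conjI allI impI)
  show dom: "dominating_set V E D"
    using assms(2) unfolding minimum_dominating_set_def by blast
  fix D' assume "D' \<subset> D"
  moreover have "finite D"
    using dominating_set_finite[OF assms(1) dom] .
  ultimately have "card D' < card D"
    by (simp add: psubset_card_mono)
  then show "\<not> dominating_set V E D'"
    using assms(2) unfolding minimum_dominating_set_def by (meson not_le)
qed

definition external_private_neighbour ::
  "'a set \<Rightarrow> ('a \<Rightarrow> 'a \<Rightarrow> bool) \<Rightarrow> 'a set \<Rightarrow> 'a \<Rightarrow> 'a \<Rightarrow> bool" where
  "external_private_neighbour V E D d p \<longleftrightarrow>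
     p \<in> V - D \<and> E d p \<and> (\<forall>d'\<in>D. E d' p \<longrightarrow> d' = d)"

lemma minimal_dominating_set_private_neighbour:
  assumes sg: "simple_graph V E" and min: "minimal_dominating_set V E D" and "d \<in> D"
  shows "(\<forall>u\<in>D. \<not> E d u) \<or> (\<exists>p. external_private_neighbour V E D d p)"
proof -
  have D_dom: "dominating_set V E D" and "\<not> dominating_set V E (D - {d})"
    using min \<open>d \<in> D\<close> unfolding minimal_dominating_set_def by blast+
  moreover have "D - {d} \<subseteq> V"
    using D_dom unfolding dominating_set_def by blast
  ultimately obtain v where "v \<in> V" "v \<notin> D - {d}" and undominated: "\<forall>u\<in>D - {d}. \<not> E u v"
    unfolding dominating_set_def by blast
  show ?thesis
  proof (cases "v = d")
    case True
    then show ?thesis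
      using undominated simple_graphD(4,5)[OF sg] by blast
  next
    case False
    then have "v \<notin> D"
      using \<open>v \<notin> D - {d}\<close> by blast
    then obtain u where "u \<in> D" "E u v"
      using D_dom \<open>v \<in> V\<close> unfolding dominating_set_def by blast
    then have "external_private_neighbour V E D d v"
      using undominated \<open>v \<in> V\<close> \<open>v \<notin> D\<close>
      unfolding external_private_neighbour_def by blast
    then show ?thesis by blast
  qed
qed

definition non_isolated_vertices :: "('a \<Rightarrow> 'a \<Rightarrow> bool) \<Rightarrow> 'a set \<Rightarrow> 'a set" where
  "non_isolated_vertices E D = {u \<in> D. \<exists>z\<in>D. E u z}"

lemma dominating_set_exchange:
  assumes sg: "simple_graph V E" and dom: "dominating_set V E D" and "d \<in> D"
    and no_private: "\<nexists>p. external_private_neighbour V E D d p" and "E d w"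
  shows "dominating_set V E (insert w (D - {d}))"
  unfolding dominating_set_def
proof (intro conjI ballI)
  show "insert w (D - {d}) \<subseteq> V"
    using dom simple_graphD(3)[OF sg \<open>E d w\<close>] unfolding dominating_set_def by blast
next
  fix v assume "v \<in> V"
  show "v \<in> insert w (D - {d}) \<or> (\<exists>u\<in>insert w (D - {d}). E u v)"
  proof (cases "v \<in> D")
    case True
    then show ?thesis
      using \<open>E d w\<close> simple_graphD(4)[OF sg] by blast
  next
    case False
    then obtain u where "u \<in> D" "E u v"
      using dom \<open>v \<in> V\<close> unfolding dominating_set_def by blast
    moreover have "u = d \<Longrightarrow> \<exists>d'\<in>D - {d}. E d' v"
      using no_private \<open>v \<in> V\<close> False \<open>E u v\<close>
      unfolding external_private_neighbour_def by blast
    ultimately show ?thesis by blast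
  qed
qed

lemma minimum_dominating_set_exchange:
  assumes sg: "simple_graph V E" and min: "minimum_dominating_set V E D" and "d \<in> D"
    and isolated: "\<forall>u\<in>D. \<not> E d u"
    and no_private: "\<nexists>p. external_private_neighbour V E D d p" and "E d w"
  shows "minimum_dominating_set V E (insert w (D - {d}))"
    and "card (non_isolated_vertices E D) < card (non_isolated_vertices E (insert w (D - {d})))"
proof -
  let ?D' = "insert w (D - {d})"
  have dom: "dominating_set V E D" and le: "\<And>D'. dominating_set V E D' \<Longrightarrow> card D \<le> card D'"
    using min unfolding minimum_dominating_set_def by blast+
  have "finite D"
    using dominating_set_finite[OF sg dom] .
  have "w \<notin> D"
    using isolated \<open>E d w\<close> by blast
  then have "card ?D' = Suc (card (D - {d}))"
    using \<open>finite D\<close> by simp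
  also have "\<dots> = card D"
    using \<open>finite D\<close> \<open>d \<in> D\<close> by (rule card_Suc_Diff1)
  finally have "card ?D' = card D" .
  then show "minimum_dominating_set V E ?D'"
    using dominating_set_exchange[OF sg dom \<open>d \<in> D\<close> no_private \<open>E d w\<close>] le
    unfolding minimum_dominating_set_def by metis
  obtain d' where "d' \<in> D - {d}" "E d' w"
    using no_private \<open>w \<notin> D\<close> \<open>E d w\<close> simple_graphD(3)[OF sg \<open>E d w\<close>]
    unfolding external_private_neighbour_def by blast
  then have "insert w (non_isolated_vertices E D) \<subseteq> non_isolated_vertices E ?D'"
    using isolated simple_graphD(4)[OF sg] unfolding non_isolated_vertices_def by blast
  then have "card (insert w (non_isolated_vertices E D)) \<le> card (non_isolated_vertices E ?D')"
    using \<open>finite D\<close> by (intro card_mono) (simp_all add: non_isolated_vertices_def)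
  moreover have "w \<notin> non_isolated_vertices E D" "finite (non_isolated_vertices E D)"
    using \<open>w \<notin> D\<close> \<open>finite D\<close> unfolding non_isolated_vertices_def by simp_all
  ultimately show "card (non_isolated_vertices E D) < card (non_isolated_vertices E ?D')"
    by simp
qed

text \<open>Bollobas-Cockayne: choose, among minimum dominating sets, one whose induced subgraph
  has as many non-isolated vertices as possible.\<close>

lemma ex_minimum_dominating_set_private_neighbours:
  assumes sg: "simple_graph V E" and no_isolated: "\<forall>v\<in>V. \<exists>u. E v u"
  shows "\<exists>D. minimum_dominating_set V E D \<and>
           (\<forall>d\<in>D. \<exists>p. external_private_neighbour V E D d p)"
proof -
  let ?f = "\<lambda>D. card (non_isolated_vertices E D)"
  obtain D0 where "minimum_dominating_set V E D0"
    using ex_minimum_dominating_set by blast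
  moreover have "?f D < Suc (card V)" if "minimum_dominating_set V E D" for D
  proof -
    have "non_isolated_vertices E D \<subseteq> V"
      using that unfolding minimum_dominating_set_def dominating_set_def non_isolated_vertices_def
      by blast
    then show ?thesis
      using card_mono[OF simple_graphD(1)[OF sg]] by (simp add: le_imp_less_Suc)
  qed
  ultimately obtain D where min: "minimum_dominating_set V E D"
    and max: "\<And>D'. minimum_dominating_set V E D' \<Longrightarrow> ?f D' \<le> ?f D"
    using ex_has_greatest_nat[of "minimum_dominating_set V E" D0 ?f "Suc (card V)"] by blast
  have "\<exists>p. external_private_neighbour V E D d p" if "d \<in> D" for d
  proof (rule ccontr)
    assume no_private: "\<nexists>p. external_private_neighbour V E D d p"
    then have isolated: "\<forall>u\<in>D. \<not> E d u"
      using minimal_dominating_set_private_neighbour[OF sg _ \<open>d \<in> D\<close>]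
        minimum_imp_minimal_dominating_set[OF sg min] by blast
    have "d \<in> V"
      using min \<open>d \<in> D\<close> unfolding minimum_dominating_set_def dominating_set_def by blast
    then obtain w where "E d w"
      using no_isolated by blast
    from minimum_dominating_set_exchange[OF sg min \<open>d \<in> D\<close> isolated no_private this]
    show False
      using max by (meson not_le)
  qed
  then show ?thesis
    using min by blast
qed

lemma dominating_set_cart_prod_fibres:
  assumes "dominating_set VG EG D"
  shows "dominating_set (cart_prod_vertices VG VH) (cart_prod_edges EG EH) (D \<times> VH)"
  using assms unfolding dominating_set_def cart_prod_vertices_def cart_prod_edges_def by fastforce

lemma minimal_dominating_set_cart_prod_fibres:
  assumes dom: "dominating_set VG EG D"
    and private_nbrs: "\<forall>d\<in>D. \<exists>p. external_private_neighbour VG EG D d p"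
  shows "minimal_dominating_set (cart_prod_vertices VG VH) (cart_prod_edges EG EH) (D \<times> VH)"
  unfolding minimal_dominating_set_def
proof (intro conjI allI impI)
  show "dominating_set (cart_prod_vertices VG VH) (cart_prod_edges EG EH) (D \<times> VH)"
    using dom by (rule dominating_set_cart_prod_fibres)
next
  fix D' assume "D' \<subset> D \<times> VH"
  then obtain d h where "d \<in> D" "h \<in> VH" "(d, h) \<notin> D'"
    by auto
  then obtain p where p: "external_private_neighbour VG EG D d p"
    using private_nbrs by blast
  \<comment> \<open>only (d, h) dominates (p, h)\<close>
  have "(p, h) \<notin> D'" and "\<forall>u\<in>D'. \<not> cart_prod_edges EG EH u (p, h)"
    using p \<open>D' \<subset> D \<times> VH\<close> \<open>(d, h) \<notin> D'\<close>
    unfolding external_private_neighbour_def cart_prod_edges_def by fastforce+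
  moreover have "(p, h) \<in> cart_prod_vertices VG VH"
    using p \<open>h \<in> VH\<close> unfolding external_private_neighbour_def cart_prod_vertices_def by blast
  ultimately show "\<not> dominating_set (cart_prod_vertices VG VH) (cart_prod_edges EG EH) D'"
    unfolding dominating_set_def by blast
qed

lemma dominating_set_cart_prod_remove_vertex:
  assumes sgH: "simple_graph VH EH" and dom: "dominating_set VG EG J" and "x \<in> J"
    and nbrs: "\<forall>g. EG x g \<longrightarrow> (\<exists>i\<in>J - {x}. EG i g)" and "EH h h'"
  shows "dominating_set (cart_prod_vertices VG VH) (cart_prod_edges EG EH) (J \<times> VH - {(x, h)})"
  unfolding dominating_set_def
proof (intro conjI ballI)
  show "J \<times> VH - {(x, h)} \<subseteq> cart_prod_vertices VG VH"
    using dom unfolding dominating_set_def cart_prod_vertices_def by blast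
next
  fix v assume "v \<in> cart_prod_vertices VG VH"
  then obtain g k where v: "v = (g, k)" "g \<in> VG" "k \<in> VH"
    unfolding cart_prod_vertices_def by blast
  have "h' \<in> VH" "h' \<noteq> h" "EH h' h"
    using simple_graphD(3,4,5)[OF sgH] \<open>EH h h'\<close> by blast+
  show "v \<in> J \<times> VH - {(x, h)} \<or> (\<exists>u\<in>J \<times> VH - {(x, h)}. cart_prod_edges EG EH u v)"
  proof (cases "v = (x, h)")
    case True
    then show ?thesis
      using \<open>x \<in> J\<close> \<open>h' \<in> VH\<close> \<open>h' \<noteq> h\<close> \<open>EH h' h\<close>
      by (intro disjI2 bexI[of _ "(x, h')"]) (auto simp: cart_prod_edges_def)
  next
    case False
    show ?thesis
    proof (cases "g \<in> J")
      case True
      then show ?thesis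
        using False v by blast
    next
      case False
      then obtain u where "u \<in> J" "EG u g"
        using dom v unfolding dominating_set_def by blast
      moreover obtain i where "i \<in> J - {x}" "EG i g" if "u = x"
        using nbrs \<open>EG u g\<close> by blast
      ultimately obtain j where "j \<in> J - {x}" "EG j g"
        by (cases "u = x") auto
      then show ?thesis
        using v by (intro disjI2 bexI[of _ "(j, k)"]) (auto simp: cart_prod_edges_def)
    qed
  qed
qed

lemma well_dominated_card_le:
  assumes "well_dominated V E" and "minimal_dominating_set V E J" and "dominating_set V E D"
  shows "card J \<le> card D"
  using assms unfolding well_dominated_def minimum_dominating_set_def by blast

lemma independent_dominating_imp_minimal_dominating_set:
  assumes "independent_set V E J" and "dominating_set V E J"
  shows "minimal_dominating_set V E J"
  using assms unfolding minimal_dominating_set_def independent_set_def dominating_set_def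
  by (metis psubsetE subset_iff)

lemma independent_set_insert:
  assumes sg: "simple_graph V E" and "independent_set V E I" and "v \<in> V"
    and "\<forall>u\<in>I. \<not> E u v"
  shows "independent_set V E (insert v I)"
  using assms simple_graphD(4,5)[OF sg] unfolding independent_set_def by auto

lemma independent_set_extends_to_dominating_set:
  assumes sg: "simple_graph V E" and "independent_set V E S"
  obtains J where "S \<subseteq> J" "independent_set V E J" "dominating_set V E J"
proof -
  let ?P = "\<lambda>J. independent_set V E J \<and> S \<subseteq> J"
  have "card J < Suc (card V)" if "?P J" for J
    using that card_mono[OF simple_graphD(1)[OF sg]]
    unfolding independent_set_def by (simp add: le_imp_less_Suc)
  then obtain J where PJ: "?P J" and max: "\<And>J'. ?P J' \<Longrightarrow> card J' \<le> card J"
    using ex_has_greatest_nat[of ?P S card "Suc (card V)"] assms(2) by blast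
  have "finite J"
    using PJ simple_graphD(1)[OF sg] finite_subset unfolding independent_set_def by blast
  have "v \<in> J \<or> (\<exists>u\<in>J. E u v)" if "v \<in> V" for v
  proof (rule ccontr)
    assume undominated: "\<not> (v \<in> J \<or> (\<exists>u\<in>J. E u v))"
    then have "?P (insert v J)"
      using PJ independent_set_insert[OF sg _ \<open>v \<in> V\<close>] by blast
    then show False
      using max[of "insert v J"] \<open>finite J\<close> undominated by simp
  qed
  then have "dominating_set V E J"
    using PJ unfolding dominating_set_def independent_set_def by blast
  then show ?thesis
    using PJ that by blast
qed

lemma isolatable_independent_set:
  assumes sg: "simple_graph V E" and "x \<in> V" and "isolatable V E x"
  obtains I where "independent_set V E (insert x I)" "x \<notin> I"
    and "\<forall>g. E x g \<longrightarrow> (\<exists>i\<in>I. E i g)"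
proof -
  obtain I where ind: "independent_set V E I" and x: "x \<in> V - closed_nbhd V E I"
    and isolated: "\<forall>y \<in> V - closed_nbhd V E I. \<not> E x y"
    using assms(3) unfolding isolatable_def by blast
  have "x \<notin> I" and no_edge: "\<forall>i\<in>I. \<not> E i x"
    using x ind unfolding closed_nbhd_def independent_set_def by blast+
  moreover have "independent_set V E (insert x I)"
    using independent_set_insert[OF sg ind \<open>x \<in> V\<close> no_edge] .
  moreover have "\<exists>i\<in>I. E i g" if "E x g" for g
    using that isolated no_edge simple_graphD(3,4)[OF sg]
    unfolding closed_nbhd_def by blast
  ultimately show ?thesis
    using that by blast
qed

lemma isolatable_maximal_independent_set:
  assumes sg: "simple_graph V E" and "x \<in> V" and "isolatable V E x"
  obtains J where "x \<in> J" "independent_set V E J" "dominating_set V E J"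
    and "\<forall>g. E x g \<longrightarrow> (\<exists>i\<in>J - {x}. E i g)"
proof -
  obtain I where I_ind: "independent_set V E (insert x I)" and "x \<notin> I"
    and x_nbrs: "\<forall>g. E x g \<longrightarrow> (\<exists>i\<in>I. E i g)"
    using isolatable_independent_set[OF assms] by blast
  obtain J where "insert x I \<subseteq> J" "independent_set V E J" "dominating_set V E J"
    using independent_set_extends_to_dominating_set[OF sg I_ind] by blast
  moreover have "\<forall>g. E x g \<longrightarrow> (\<exists>i\<in>J - {x}. E i g)"
    using x_nbrs \<open>insert x I \<subseteq> J\<close> \<open>x \<notin> I\<close> by blast
  ultimately show ?thesis
    by (intro that) auto
qed

theorem corollary19:
  fixes VG :: "'a set" and EG :: "'a \<Rightarrow> 'a \<Rightarrow> bool"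
    and VH :: "'b set" and EH :: "'b \<Rightarrow> 'b \<Rightarrow> bool"
  assumes "simple_graph VG EG" and "connected_graph VG EG" and "card VG \<ge> 2"
    and "well_dominated VG EG"
    and "\<exists>x\<in>VG. isolatable VG EG x"
    and "simple_graph VH EH" and "connected_graph VH EH" and "card VH \<ge> 2"
  shows "\<not> well_dominated (cart_prod_vertices VG VH) (cart_prod_edges EG EH)"
proof
  let ?V = "cart_prod_vertices VG VH" and ?E = "cart_prod_edges EG EH"
  assume wd_prod: "well_dominated ?V ?E"
  have "\<forall>v\<in>VG. \<exists>u. EG v u"
    using connected_graph_neighbour[OF assms(2,3)] by blast
  then obtain D where D_min: "minimum_dominating_set VG EG D"
    and D_private: "\<forall>d\<in>D. \<exists>p. external_private_neighbour VG EG D d p"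
    using ex_minimum_dominating_set_private_neighbours[OF assms(1)] by blast
  then have D_dom: "dominating_set VG EG D"
    unfolding minimum_dominating_set_def by blast
  obtain x where "x \<in> VG" and "isolatable VG EG x"
    using assms(5) by blast
  then obtain J where "x \<in> J" and J_ind: "independent_set VG EG J" and J_dom: "dominating_set VG EG J"
    and x_nbrs: "\<forall>g. EG x g \<longrightarrow> (\<exists>i\<in>J - {x}. EG i g)"
    by (rule isolatable_maximal_independent_set[OF assms(1)])
  have "card J \<le> card D"
    using well_dominated_card_le[OF assms(4)
        independent_dominating_imp_minimal_dominating_set[OF J_ind J_dom] D_dom] .
  obtain h h' where "h \<in> VH" and "EH h h'"
    using connected_graph_edge[OF assms(7,8)] by blast
  have "card (D \<times> VH) \<le> card (J \<times> VH - {(x, h)})"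
    using well_dominated_card_le[OF wd_prod minimal_dominating_set_cart_prod_fibres[OF D_dom D_private]
        dominating_set_cart_prod_remove_vertex[OF assms(6) J_dom \<open>x \<in> J\<close> x_nbrs \<open>EH h h'\<close>]] .
  also have "\<dots> < card (J \<times> VH)"
    using \<open>x \<in> J\<close> \<open>h \<in> VH\<close> dominating_set_finite[OF assms(1) J_dom]
      simple_graphD(1)[OF assms(6)]
    by (intro card_Diff1_less) auto
  also have "\<dots> \<le> card (D \<times> VH)"
    using \<open>card J \<le> card D\<close> by (simp add: card_cartesian_product)
  finally show False by simp
qed

end
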